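(* Let $n\ge2$, let $f_n$ be a primitive polynomial of degree $n$ over $\mathbb F_2$ with root $\alpha$, and identify $\mathbb F_2[x]/\langle f_n\rangle$ with $\mathbb F_{2^n}$. Let $q=2^{n-1}$ and $k=2^n-1=2q-1$. For $j=0,\dots,2^n-2$ let $H_{j,n}=\{\beta\in\mathbb F_{2^n}:\operatorname{Tr}(\alpha^j\beta)=0\}$ and $H_{j,n}^c=\mathbb F_{2^n}\setminus H_{j,n}$. Let $W_n$ be the $2q\times 2k$ $(0,1)$-matrix whose rows are indexed by the elements $x\in\mathbb F_{2^n}$ and whose columns are indexed by $H_{0,n},\dots,H_{k-1,n},H_{0,n}^c,\dots,H_{k-1,n}^c$ (the subgroups first, and the complement of $H_{j,n}$ in the column $k$ places after that of $H_{j,n}$), with entry $(W_n)_{x,A}=1$ if $x\in A$ and $0$ otherwise. Then $W_n$ has full rank $2q=2^n$ (as a matrix over $\mathbb Q$).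
   Context: $\operatorname{Tr}:\mathbb F_{2^n}\to\mathbb F_2$ is the trace map $\operatorname{Tr}(\beta)=\beta+\beta^2+\dots+\beta^{2^{n-1}}$; each $H_{j,n}$ is an additive subgroup of $\mathbb F_{2^n}$ of order $2^{n-1}$. *)

theory Defs
  imports "Jordan_Normal_Form.DL_Rank" "HOL-Computational_Algebra.Polynomial"
begin

text \<open>Absolute trace F_{2^n} -> F_2 (values lie in the prime field {0,1} of the field).\<close>
definition tr2 :: "nat \<Rightarrow> 'a::field \<Rightarrow> 'a" where
  "tr2 n \<beta> = (\<Sum>i<n. \<beta> ^ (2 ^ i))"

definition Hsub :: "nat \<Rightarrow> 'a::field \<Rightarrow> nat \<Rightarrow> 'a set" where
  "Hsub n \<alpha> j = {\<beta>. tr2 n (\<alpha> ^ j * \<beta>) = 0}"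

definition primitive_element :: "'a::field \<Rightarrow> bool" where
  "primitive_element \<alpha> \<longleftrightarrow> \<alpha> \<noteq> 0 \<and> (\<forall>x. x \<noteq> 0 \<longrightarrow> (\<exists>i. x = \<alpha> ^ i))"

text \<open>The matrix W_n over Q. Rows are indexed via an enumeration e of the field
  (row r corresponds to the element e r); columns 0..k-1 are H_0..H_{k-1},
  columns k..2k-1 are their complements.\<close>
definition Wmat :: "nat \<Rightarrow> 'a::field \<Rightarrow> (nat \<Rightarrow> 'a) \<Rightarrow> rat mat" where
  "Wmat n \<alpha> e = (let k = 2 ^ n - 1 in
     mat (2 ^ n) (2 * k) (\<lambda>(r, c).
       let A = (if c < k then Hsub n \<alpha> c else UNIV - Hsub n \<alpha> (c - k))
       in if e r \<in> A then 1 else 0))"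

end

theory Submission
  imports Defs "HOL-Computational_Algebra.Primes" "HOL-Library.Cardinality"
begin

text \<open>
  Let \<open>\<chi>(t) = (-1)^Tr(t)\<close>. The column of \<open>H\<^sub>j\<close> is \<open>x \<mapsto> (1 + \<chi>(\<alpha>^j x))/2\<close> and that of
  its complement is \<open>x \<mapsto> (1 - \<chi>(\<alpha>^j x))/2\<close>, so the column space contains the constant
  vector and, as \<open>\<alpha>^j\<close> runs through the nonzero elements, every character \<open>x \<mapsto> \<chi>(a x)\<close>.
  The character sum \<open>\<Sum>\<^sub>g \<chi>(g z) = 2^n [z = 0]\<close> (the trace is not identically zero) gives
  Fourier inversion \<open>2^n y(x) = \<Sum>\<^sub>a \<chi>(a x) \<Sum>\<^sub>r y(r) \<chi>(a r)\<close>, which writes every vector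
  explicitly as a combination of columns of \<open>W\<^sub>n\<close>.
\<close>

lemma rank_eq_if_mult_mat_vec_surj:
  fixes A :: "'a::field mat"
  assumes A: "A \<in> carrier_mat nr nc"
    and surj: "\<And>y. y \<in> carrier_vec nr \<Longrightarrow> \<exists>x\<in>carrier_vec nc. A *\<^sub>v x = y"
  shows "vec_space.rank nr A = nr"
proof -
  interpret vec_space "TYPE('a)" nr .
  have "col_space A = carrier_vec nr"
    using A surj unfolding col_space_eq[OF A] by auto
  then have "span_vs (set (cols A)) = V"
    unfolding col_space_def by simp
  then show ?thesis
    unfolding rank_def using dim_is_n by simp
qed

lemma sum_lessThan_double:
  fixes g :: "nat \<Rightarrow> 'a::comm_monoid_add"
  shows "(\<Sum>c<2 * k. g c) = (\<Sum>j<k. g j + g (j + k))"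
proof -
  have "(\<Sum>c<2 * k. g c) = (\<Sum>c\<in>{0..<k}. g c) + (\<Sum>c\<in>{k..<k + k}. g c)"
    using sum.atLeastLessThan_concat[of 0 k "k + k" g] by (simp add: mult_2 atLeast0LessThan)
  also have "(\<Sum>c\<in>{k..<k + k}. g c) = (\<Sum>j\<in>{0..<k}. g (j + k))"
    using sum.shift_bounds_nat_ivl[of g 0 k k] by simp
  finally show ?thesis
    by (simp add: sum.distrib atLeast0LessThan)
qed

text \<open>The library's \<open>finite_field_power_card_eq_same\<close> needs the sort \<open>finite_field\<close>, which
  is not derivable for a type variable of sort \<open>{field,finite}\<close>.\<close>

lemma finite_field_power_card_minus_1:
  fixes x :: "'a::{field,finite}"
  assumes "x \<noteq> 0"
  shows "x ^ (CARD('a) - 1) = 1"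
proof -
  have "(\<Prod>y\<in>UNIV - {0}. x * y) = (\<Prod>y\<in>UNIV - {0::'a}. y)"
    by (rule prod.reindex_bij_witness[of _ "\<lambda>y. y / x" "\<lambda>y. x * y"]) (use assms in auto)
  moreover have "(\<Prod>y\<in>UNIV - {0}. x * y) = x ^ (CARD('a) - 1) * (\<Prod>y\<in>UNIV - {0::'a}. y)"
    by (simp add: prod.distrib card_Diff_singleton)
  moreover have "(\<Prod>y\<in>UNIV - {0::'a}. y) \<noteq> 0"
    by simp
  ultimately show ?thesis
    by simp
qed

lemma finite_field_power_card:
  fixes x :: "'a::{field,finite}"
  shows "x ^ CARD('a) = x"
proof (cases "x = 0")
  case False
  have "CARD('a) = Suc (CARD('a) - 1)"
    using finite_UNIV_card_ge_0[where 'a = 'a] by simp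
  then have "x ^ CARD('a) = x * x ^ (CARD('a) - 1)"
    by (metis power_Suc)
  then show ?thesis
    using finite_field_power_card_minus_1[OF False] by simp
qed simp

lemma primitive_element_power_bij:
  fixes \<alpha> :: "'a::{field,finite}"
  assumes "primitive_element \<alpha>"
  shows "bij_betw (\<lambda>j. \<alpha> ^ j) {..<CARD('a) - 1} (UNIV - {0})"
proof -
  let ?k = "CARD('a) - 1"
  have \<alpha>: "\<alpha> \<noteq> 0" and gen: "\<And>x. x \<noteq> 0 \<Longrightarrow> \<exists>i. x = \<alpha> ^ i"
    using assms unfolding primitive_element_def by auto
  have card_units: "card (UNIV - {0::'a}) = ?k"
    by (simp add: card_Diff_singleton)
  then have "?k > 0"
    by (metis DiffI UNIV_I card_gt_0_iff empty_iff finite one_neq_zero singletonD)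
  have image: "(\<lambda>j. \<alpha> ^ j) ` {..<?k} = UNIV - {0}"
  proof
    show "UNIV - {0} \<subseteq> (\<lambda>j. \<alpha> ^ j) ` {..<?k}"
    proof
      fix x :: 'a
      assume "x \<in> UNIV - {0}"
      then obtain i where "x = \<alpha> ^ i"
        using gen by auto
      also have "\<alpha> ^ i = \<alpha> ^ (?k * (i div ?k) + i mod ?k)"
        by simp
      also have "\<dots> = \<alpha> ^ (i mod ?k)"
        unfolding power_add power_mult finite_field_power_card_minus_1[OF \<alpha>] by simp
      finally show "x \<in> (\<lambda>j. \<alpha> ^ j) ` {..<?k}"
        using \<open>?k > 0\<close> by auto
    qed
  qed (use \<alpha> in auto)
  then have "inj_on (\<lambda>j. \<alpha> ^ j) {..<?k}"
    using card_units by (simp add: inj_on_iff_eq_card)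
  with image show ?thesis
    unfolding bij_betw_def by simp
qed

lemma sum_UNIV_primitive_powers:
  fixes \<alpha> :: "'a::{field,finite}"
  assumes "primitive_element \<alpha>"
  shows "(\<Sum>a\<in>UNIV. h a) = h 0 + (\<Sum>j<CARD('a) - 1. h (\<alpha> ^ j))"
  using sum.remove[of UNIV 0 h] sum.reindex_bij_betw[OF primitive_element_power_bij[OF assms], of h]
  by simp

lemma Wmat_carrier: "Wmat n \<alpha> e \<in> carrier_mat (2 ^ n) (2 * (2 ^ n - 1))"
  unfolding Wmat_def Let_def by simp

locale char2_finite_field =
  fixes n :: nat and field_type :: "'a::{field,finite} itself"
  assumes card_UNIV: "CARD('a) = 2 ^ n"
    and one_plus_one: "(1::'a) + 1 = 0"
begin

lemma n_pos: "n > 0"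
proof (rule ccontr)
  assume "\<not> n > 0"
  then have "CARD('a) = 1"
    using card_UNIV by simp
  then show False
    by (metis card_1_singletonE one_neq_zero singletonD UNIV_I)
qed

lemma CHAR_eq_2: "CHAR('a) = 2"
  by (rule CHAR_eq_posI) (use one_plus_one in \<open>auto simp: less_2_cases_iff\<close>)

lemma add_eq_0_iff_eq: "(a::'a) + b = 0 \<longleftrightarrow> a = b"
proof -
  have "b + b = 0"
    using one_plus_one by (metis distrib_left mult_1_right mult_zero_right)
  then show ?thesis
    by (metis add_diff_cancel_right' diff_0 minus_add_cancel add.commute)
qed

lemma power_two_power_add: "((a::'a) + b) ^ (2 ^ i) = a ^ (2 ^ i) + b ^ (2 ^ i)"
  by (rule freshmans_dream') (simp_all add: CHAR_eq_2)

lemma sum_power2: "(\<Sum>x\<in>A. f x :: 'a) ^ 2 = (\<Sum>x\<in>A. f x ^ 2)"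
  by (rule freshmans_dream_sum) (simp_all add: CHAR_eq_2)

lemma tr2_add: "tr2 n ((a::'a) + b) = tr2 n a + tr2 n b"
  unfolding tr2_def by (simp add: power_two_power_add sum.distrib)

lemma tr2_power2: "tr2 n (t::'a) ^ 2 = tr2 n t"
proof -
  have "tr2 n t ^ 2 = (\<Sum>i<n. t ^ (2 ^ Suc i))"
    unfolding tr2_def sum_power2 by (simp add: power_mult[symmetric] mult.commute)
  moreover have "(\<Sum>i<Suc n. t ^ (2 ^ i)) = t + (\<Sum>i<n. t ^ (2 ^ Suc i))"
    by (subst sum.lessThan_Suc_shift) simp
  moreover have "(\<Sum>i<Suc n. t ^ (2 ^ i)) = tr2 n t + t"
    unfolding tr2_def using finite_field_power_card[of t] card_UNIV by simp
  ultimately show ?thesis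
    by (simp add: add.commute)
qed

lemma tr2_eq_0_or_1: "tr2 n (t::'a) = 0 \<or> tr2 n t = 1"
proof -
  have "tr2 n t * (tr2 n t - 1) = 0"
    using tr2_power2[of t] by (simp add: power2_eq_square algebra_simps)
  then show ?thesis
    by simp
qed

text \<open>The trace is a polynomial of degree \<open>2^(n-1)\<close>, too small to vanish on \<open>2^n\<close> points.\<close>

lemma tr2_not_identically_zero: "\<exists>w::'a. tr2 n w \<noteq> 0"
proof (rule ccontr)
  assume trace_zero: "\<not> ?thesis"
  define P :: "'a poly" where "P = (\<Sum>i<n. monom 1 (2 ^ i))"
  have "poly P w = tr2 n w" for w
    unfolding P_def tr2_def by (simp add: poly_sum poly_monom)
  then have roots: "{x. poly P x = 0} = UNIV"
    using trace_zero by auto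
  have deg: "degree P \<le> 2 ^ (n - 1)"
    unfolding P_def
  proof (rule degree_sum_le)
    fix i
    assume "i \<in> {..<n}"
    then have "(2::nat) ^ i \<le> 2 ^ (n - 1)"
      by (intro power_increasing) auto
    then show "degree (monom (1::'a) (2 ^ i)) \<le> 2 ^ (n - 1)"
      by (simp add: degree_monom_eq)
  qed simp
  have "coeff P (2 ^ (n - 1)) = (\<Sum>i<n. if 2 ^ (n - 1) = (2::nat) ^ i then 1 else 0)"
    unfolding P_def by (simp add: coeff_sum coeff_monom)
  also have "\<dots> = (\<Sum>i\<in>{n - 1}. 1)"
    by (rule sum.mono_neutral_cong_right) (use n_pos in auto)
  finally have "P \<noteq> 0"
    by auto
  then have "CARD('a) \<le> degree P"
    using card_poly_roots_bound[of P] roots by simp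
  moreover have "(2::nat) ^ (n - 1) < 2 ^ n"
    using n_pos by (intro power_strict_increasing) auto
  ultimately show False
    using card_UNIV deg by linarith
qed

definition trace_char :: "'a \<Rightarrow> rat" where
  "trace_char t = (if tr2 n t = 0 then 1 else -1)"

lemma trace_char_0 [simp]: "trace_char 0 = 1"
  unfolding trace_char_def tr2_def by simp

lemma trace_char_add: "trace_char (a + b) = trace_char a * trace_char b"
  unfolding trace_char_def tr2_add using tr2_eq_0_or_1[of a] tr2_eq_0_or_1[of b] one_plus_one
  by auto

lemma trace_char_sum: "(\<Sum>g\<in>UNIV. trace_char (g * z)) = (if z = 0 then 2 ^ n else 0)"
proof (cases "z = 0")
  case True
  then show ?thesis
    using card_UNIV by simp
next
  case False
  obtain w :: 'a where "tr2 n w \<noteq> 0"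
    using tr2_not_identically_zero by blast
  then have shift: "trace_char w = -1"
    unfolding trace_char_def by simp
  have "(\<Sum>g\<in>UNIV. trace_char (g * z)) = (\<Sum>g\<in>UNIV. trace_char ((g + w / z) * z))"
    by (rule sum.reindex_bij_witness[of _ "\<lambda>g. g + w / z" "\<lambda>g. g - w / z"]) auto
  also have "\<dots> = - (\<Sum>g\<in>UNIV. trace_char (g * z))"
    using False by (simp add: distrib_right trace_char_add shift sum_negf)
  finally show ?thesis
    using False by simp
qed

lemma trace_char_inversion:
  assumes "finite R" "inj_on e R" "i \<in> R"
  shows "(\<Sum>a\<in>UNIV. trace_char (a * e i) * (\<Sum>r\<in>R. y r * trace_char (a * e r))) = 2 ^ n * y i"
proof -
  have "(\<Sum>a\<in>UNIV. trace_char (a * e i) * (\<Sum>r\<in>R. y r * trace_char (a * e r)))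
      = (\<Sum>r\<in>R. y r * (\<Sum>a\<in>UNIV. trace_char (a * (e r + e i))))"
    by (simp add: sum_distrib_left sum.swap[of _ UNIV] distrib_left trace_char_add mult_ac)
  also have "\<dots> = (\<Sum>r\<in>R. if r = i then 2 ^ n * y r else 0)"
    using assms(2,3) by (intro sum.cong) (auto simp: trace_char_sum add_eq_0_iff_eq inj_on_eq_iff)
  also have "\<dots> = 2 ^ n * y i"
    using assms(1,3) by simp
  finally show ?thesis .
qed

lemma Wmat_entries:
  assumes "i < 2 ^ n" "j < 2 ^ n - 1"
  shows "Wmat n \<alpha> e $$ (i, j) = (1 + trace_char (\<alpha> ^ j * e i)) / 2"
    and "Wmat n \<alpha> e $$ (i, j + (2 ^ n - 1)) = (1 - trace_char (\<alpha> ^ j * e i)) / 2"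
  using assms by (auto simp: Wmat_def Let_def Hsub_def trace_char_def)

lemma Wmat_mult_vec_surj:
  fixes \<alpha> :: 'a and e :: "nat \<Rightarrow> 'a" and y :: "rat vec"
  assumes \<alpha>: "primitive_element \<alpha>" and e: "bij_betw e {0..<2 ^ n} UNIV"
    and y: "y \<in> carrier_vec (2 ^ n)"
  shows "\<exists>x\<in>carrier_vec (2 * (2 ^ n - 1)). Wmat n \<alpha> e *\<^sub>v x = y"
proof -
  let ?k = "2 ^ n - 1 :: nat"
  define fourier where "fourier a = (\<Sum>r<2 ^ n. y $ r * trace_char (a * e r))" for a
  define const where "const j = (if j = 0 then fourier 0 else 0)" for j :: nat
  define x where "x = vec (2 * ?k) (\<lambda>c. if c < ?k
    then (const c + fourier (\<alpha> ^ c)) / 2 ^ n else (const (c - ?k) - fourier (\<alpha> ^ (c - ?k))) / 2 ^ n)"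
  have "?k > 0"
    using n_pos one_less_power[of "2::nat" n] by simp
  have "(Wmat n \<alpha> e *\<^sub>v x) $ i = y $ i" if i: "i < 2 ^ n" for i
  proof -
    have "(Wmat n \<alpha> e *\<^sub>v x) $ i = (\<Sum>c<2 * ?k. Wmat n \<alpha> e $$ (i, c) * x $ c)"
      using Wmat_carrier[of n \<alpha> e] i
      unfolding mult_mat_vec_def scalar_prod_def x_def by (simp add: atLeast0LessThan)
    also have "\<dots> = (\<Sum>j<?k. Wmat n \<alpha> e $$ (i, j) * x $ j + Wmat n \<alpha> e $$ (i, j + ?k) * x $ (j + ?k))"
      by (rule sum_lessThan_double)
    also have "\<dots> = (\<Sum>j<?k. (const j + trace_char (\<alpha> ^ j * e i) * fourier (\<alpha> ^ j)) / 2 ^ n)"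
    proof (rule sum.cong[OF refl])
      fix j
      assume "j \<in> {..<?k}"
      then have j: "j < ?k"
        by simp
      have x_low: "x $ j = (const j + fourier (\<alpha> ^ j)) / 2 ^ n"
        using j by (simp add: x_def)
      have x_high: "x $ (j + ?k) = (const j - fourier (\<alpha> ^ j)) / 2 ^ n"
      proof -
        have "j + ?k < 2 * ?k" "\<not> j + ?k < ?k"
          using j by linarith+
        then show ?thesis
          unfolding x_def by (simp only: index_vec if_False add_diff_cancel_right')
      qed
      show "Wmat n \<alpha> e $$ (i, j) * x $ j + Wmat n \<alpha> e $$ (i, j + ?k) * x $ (j + ?k)
          = (const j + trace_char (\<alpha> ^ j * e i) * fourier (\<alpha> ^ j)) / 2 ^ n"
        unfolding Wmat_entries[OF i j] x_low x_high by (simp add: field_simps)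
    qed
    also have "\<dots> = (fourier 0 + (\<Sum>j<?k. trace_char (\<alpha> ^ j * e i) * fourier (\<alpha> ^ j))) / 2 ^ n"
      using \<open>?k > 0\<close> by (simp add: const_def sum.distrib flip: sum_divide_distrib)
    also have "\<dots> = (\<Sum>a\<in>UNIV. trace_char (a * e i) * fourier a) / 2 ^ n"
      using sum_UNIV_primitive_powers[OF \<alpha>, of "\<lambda>a. trace_char (a * e i) * fourier a"] card_UNIV
      by simp
    also have "\<dots> = y $ i"
      using trace_char_inversion[of "{..<2 ^ n}" e i "\<lambda>r. y $ r"] e i
      by (simp add: fourier_def bij_betw_def atLeast0LessThan)
    finally show ?thesis .
  qed
  moreover have "x \<in> carrier_vec (2 * ?k)"
    unfolding x_def by simp
  ultimately show ?thesis
    using y Wmat_carrier[of n \<alpha> e] by (intro bexI[of _ x] eq_vecI) auto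
qed

end

theorem mainTheorem4:
  fixes n :: nat and f :: "'a::{field,finite} poly" and \<alpha> :: 'a and e :: "nat \<Rightarrow> 'a"
  assumes "n \<ge> 2"
    and "card (UNIV :: 'a set) = 2 ^ n"
    and "(1::'a) + 1 = 0"
    and "degree f = n" and "lead_coeff f = 1" and "\<forall>i. coeff f i \<in> {0, 1}"
    and "poly f \<alpha> = 0"
    and "primitive_element \<alpha>"
    and "bij_betw e {0..<2 ^ n} (UNIV :: 'a set)"
  shows "vec_space.rank (2 ^ n) (Wmat n \<alpha> e) = 2 ^ n"
proof -
  interpret char2_finite_field n "TYPE('a)"
    using assms(2,3) by unfold_locales
  show ?thesis
    using Wmat_carrier Wmat_mult_vec_surj[OF assms(8,9)] by (rule rank_eq_if_mult_mat_vec_surj)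
qed

end
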